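(* Identify $\mathrm{SO}(2)$ with $\mathbb{C}_1=\{z\in\mathbb{C}:|z|=1\}$, let $n$ be even, let $G([n],E)$ be the complete graph, and let $\boldsymbol{z}^\star\in\mathbb{C}_1^n$ be the ground truth. Then there exist a choice of bad edges $E_b\subset E$ such that every node $j$ is incident to exactly one edge of $E_b$, a choice of corrupted measurements $z_{jk}\in\mathbb{C}_1$ for $jk\in E_b$ (with $z_{jk}=z_j^\star\overline{z_k^\star}$ for $jk\in E\setminus E_b$), and a point $\hat{\boldsymbol{z}}\in\mathbb{C}_1^n$ with $0<\delta(\hat{\boldsymbol{z}})<\pi$ that is a fixed point of GD-$L_1$-MRA, i.e. $\partial_vF_\angle^j(\hat z_j;\hat{\boldsymbol{z}})\ge 0$ for all $j\in[n]$ and $v\in\{\pm1\}$.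
   Context: $d_\angle(z_1,z_2)=|\arg(z_1\overline{z_2})|$ with $\arg\in(-\pi,\pi]$; $\delta(\boldsymbol{z})=\max_{jk\in E}d_\angle(\overline{z_j^\star}z_j,\overline{z_k^\star}z_k)$. Coordinate energy: $F_\angle^j(y;\boldsymbol{z})=\sum_{k\in[n]\setminus\{j\}}d_\angle(y,z_{jk}z_k)$; for $v\in\{\pm1\}$, $\partial_vF_\angle^j(y;\boldsymbol{z})=\lim_{h\to0^+}(F_\angle^j(e^{ivh}y;\boldsymbol{z})-F_\angle^j(y;\boldsymbol{z}))/h$. GD-$L_1$-MRA cyclically updates one coordinate $j$ at a time: if some $v\in\{\pm1\}$ has $\partial_vF_\angle^j(z_j;\boldsymbol{z})<0$, it moves $z_j$ along $s\mapsto e^{ivs}z_j$ to the first point of $\{\pm z_{jk}z_k\}$ at which $\partial_vF_\angle^j\ge0$; otherwise $z_j$ is left unchanged. Hence its fixed points are exactly the $\boldsymbol{z}$ with $\partial_vF_\angle^j(z_j;\boldsymbol{z})\ge0$ for all $j$ and $v\in\{\pm1\}$. *)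

theory Defs
  imports "HOL-Analysis.Analysis"
begin

definition d_ang :: "complex \<Rightarrow> complex \<Rightarrow> real" where
  "d_ang z1 z2 = \<bar>Arg (z1 * cnj z2)\<bar>"

definition complete_edges :: "nat \<Rightarrow> nat set set" where
  "complete_edges n = {{j, k} | j k. j < n \<and> k < n \<and> j \<noteq> k}"

definition delta :: "nat \<Rightarrow> (nat \<Rightarrow> complex) \<Rightarrow> (nat \<Rightarrow> complex) \<Rightarrow> real" where
  "delta n zs z = Max {d_ang (cnj (zs j) * z j) (cnj (zs k) * z k) | j k. j < n \<and> k < n \<and> j \<noteq> k}"

definition F_ang :: "nat \<Rightarrow> (nat \<Rightarrow> nat \<Rightarrow> complex) \<Rightarrow> nat \<Rightarrow> complex \<Rightarrow> (nat \<Rightarrow> complex) \<Rightarrow> real" where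
  "F_ang n Z j y z = (\<Sum>k\<in>{..<n} - {j}. d_ang y (Z j k * z k))"

definition has_dir_deriv :: "(complex \<Rightarrow> real) \<Rightarrow> complex \<Rightarrow> real \<Rightarrow> real \<Rightarrow> bool" where
  "has_dir_deriv f y v D \<longleftrightarrow>
     ((\<lambda>h. (f (exp (\<i> * complex_of_real (v * h)) * y) - f y) / h) \<longlongrightarrow> D) (at_right 0)"

end

(*
  Rotate the odd-indexed nodes of the ground truth by pi/2 and corrupt exactly the matching
  edges {2i, 2i+1}, replacing their measurements by the ones consistent with the rotated point.
  Then delta = pi/2, and for n = 2m the residual angle at node j is 0 towards its partner and
  the m - 1 other nodes of its parity, and +-pi/2 towards the remaining m - 1 nodes. Moving z_j
  in either direction increases the m terms with residual 0 at unit rate and decreases at most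
  m - 1 terms at unit rate, so every one-sided derivative of the coordinate energy is at least 1.
*)
theory Submission
  imports Defs
begin

lemma abs_affine_right_deriv:
  fixes t v :: real
  shows "((\<lambda>h. (\<bar>t + v * h\<bar> - \<bar>t\<bar>) / h) \<longlongrightarrow> (if t = 0 then \<bar>v\<bar> else v * sgn t)) (at_right 0)"
proof -
  have lim: "((\<lambda>h. t + v * h) \<longlongrightarrow> t) (at_right 0)"
    by (auto intro!: tendsto_eq_intros)
  have "\<forall>\<^sub>F h in at_right 0. (\<bar>t + v * h\<bar> - \<bar>t\<bar>) / h = (if t = 0 then \<bar>v\<bar> else v * sgn t)"
  proof (cases t "0::real" rule: linorder_cases)
    case less
    from order_tendstoD(2)[OF lim less] eventually_at_right_less[of 0]
    show ?thesis by eventually_elim (use less in auto)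
  next
    case equal
    from eventually_at_right_less[of 0] show ?thesis
      by eventually_elim (use equal in \<open>auto simp: abs_mult\<close>)
  next
    case greater
    from order_tendstoD(1)[OF lim greater] eventually_at_right_less[of 0]
    show ?thesis by eventually_elim (use greater in auto)
  qed
  then show ?thesis by (rule tendsto_eventually)
qed

lemma d_ang_rotate:
  assumes "y * cnj c = cis t" and "-pi < t + s" and "t + s \<le> pi"
  shows "d_ang (exp (\<i> * complex_of_real s) * y) c = \<bar>t + s\<bar>"
proof -
  have "exp (\<i> * complex_of_real s) * y * cnj c = cis (t + s)"
    by (simp add: assms(1) cis_conv_exp[symmetric] cis_mult mult.assoc add.commute)
  then show ?thesis
    unfolding d_ang_def using assms(2,3) by (simp add: Arg_cis)
qed

lemma d_ang_right_deriv:
  assumes "y * cnj c = cis t" and "\<bar>t\<bar> < pi"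
  shows "((\<lambda>h. (d_ang (exp (\<i> * complex_of_real (v * h)) * y) c - d_ang y c) / h)
           \<longlongrightarrow> (if t = 0 then \<bar>v\<bar> else v * sgn t)) (at_right 0)"
proof -
  have lim: "((\<lambda>h. t + v * h) \<longlongrightarrow> t) (at_right 0)"
    by (auto intro!: tendsto_eq_intros)
  have t: "-pi < t" "t < pi"
    using assms(2) by auto
  have unrotated: "d_ang y c = \<bar>t\<bar>"
    using d_ang_rotate[OF assms(1), of 0] t by simp
  from order_tendstoD(1)[OF lim t(1)] order_tendstoD(2)[OF lim t(2)]
  have "\<forall>\<^sub>F h in at_right 0. (\<bar>t + v * h\<bar> - \<bar>t\<bar>) / h
          = (d_ang (exp (\<i> * complex_of_real (v * h)) * y) c - d_ang y c) / h"
    by eventually_elim (subst d_ang_rotate[OF assms(1)], auto simp: unrotated)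
  then show ?thesis
    by (rule Lim_transform_eventually[OF abs_affine_right_deriv])
qed

lemma has_dir_deriv_F_ang:
  assumes "\<And>k. k \<in> {..<n} - {j} \<Longrightarrow> y * cnj (Z j k * z k) = cis (t k) \<and> \<bar>t k\<bar> < pi"
  shows "has_dir_deriv (\<lambda>y. F_ang n Z j y z) y v
           (\<Sum>k\<in>{..<n} - {j}. if t k = 0 then \<bar>v\<bar> else v * sgn (t k))"
  unfolding has_dir_deriv_def F_ang_def sum_subtractf[symmetric] sum_divide_distrib
  by (intro tendsto_sum d_ang_right_deriv) (use assms in auto)

lemma sum_lessThan_double:
  "(\<Sum>k<2 * m. f k) = (\<Sum>i<m. f (2 * i) + f (Suc (2 * i)))"
  by (induction m) (simp_all add: add.assoc)

definition partner :: "nat \<Rightarrow> nat" where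
  "partner j = (if even j then Suc j else j - 1)"

definition phase :: "nat \<Rightarrow> real" where
  "phase k = (if even k then 0 else pi / 2)"

definition partner_matching :: "nat \<Rightarrow> nat set set" where
  "partner_matching n = {{j, partner j} | j. j < n}"

definition rotated :: "(nat \<Rightarrow> complex) \<Rightarrow> nat \<Rightarrow> complex" where
  "rotated zs k = zs k * cis (phase k)"

definition corrupted :: "(nat \<Rightarrow> complex) \<Rightarrow> nat \<Rightarrow> nat \<Rightarrow> complex" where
  "corrupted zs j k =
     (if k = partner j then rotated zs j * cnj (rotated zs k) else zs j * cnj (zs k))"

definition residual :: "nat \<Rightarrow> nat \<Rightarrow> real" where
  "residual j k = (if k = partner j then 0 else phase j - phase k)"

lemma partner_partner [simp]: "partner (partner j) = j"
  unfolding partner_def by auto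

lemma partner_neq: "partner j \<noteq> j"
  unfolding partner_def by (auto elim: oddE)

lemma partner_less: "even n \<Longrightarrow> j < n \<Longrightarrow> partner j < n"
  unfolding partner_def by (auto elim!: evenE)

lemma partner_matching_subset: "even n \<Longrightarrow> partner_matching n \<subseteq> complete_edges n"
  unfolding partner_matching_def complete_edges_def using partner_less partner_neq by blast

lemma mem_partner_matching_iff:
  assumes "j < n"
  shows "{j, k} \<in> partner_matching n \<longleftrightarrow> k = partner j"
proof
  assume "{j, k} \<in> partner_matching n"
  then obtain i where "{j, k} = {i, partner i}"
    unfolding partner_matching_def by auto
  then show "k = partner j"
    by (metis doubleton_eq_iff partner_partner)
qed (use assms in \<open>auto simp: partner_matching_def\<close>)

lemma partner_matching_unique_edge:
  assumes "j < n"
  shows "\<exists>!e. e \<in> partner_matching n \<and> j \<in> e"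
proof (rule ex1I[of _ "{j, partner j}"])
  show "{j, partner j} \<in> partner_matching n \<and> j \<in> {j, partner j}"
    unfolding partner_matching_def using assms by auto
next
  fix e
  assume "e \<in> partner_matching n \<and> j \<in> e"
  then obtain i where "e = {i, partner i}" "j \<in> e"
    unfolding partner_matching_def by auto
  then show "e = {j, partner j}"
    by (metis insertE insert_commute partner_partner singletonD)
qed

lemma cnj_mult_self_unit: "cmod z = 1 \<Longrightarrow> cnj z * z = 1"
  by (metis complex_norm_square mult.commute of_real_1 power_one)

lemma norm_rotated: "cmod (zs k) = 1 \<Longrightarrow> cmod (rotated zs k) = 1"
  by (simp add: rotated_def norm_mult)

lemma norm_corrupted:
  assumes "cmod (zs j) = 1" and "cmod (zs k) = 1"
  shows "cmod (corrupted zs j k) = 1"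
  unfolding corrupted_def if_distrib[of cmod] norm_mult complex_mod_cnj
    norm_rotated[of zs j, OF assms(1)] norm_rotated[of zs k, OF assms(2)] assms
  by simp

lemma corrupted_swap: "corrupted zs k j = cnj (corrupted zs j k)"
  unfolding corrupted_def by (auto simp: mult.commute)

lemma corrupted_measurement:
  assumes "\<forall>j<n. cmod (zs j) = 1" and "j < n" and "k < n"
  shows "if {j, k} \<in> partner_matching n
           then cmod (corrupted zs j k) = 1 \<and> corrupted zs k j = cnj (corrupted zs j k)
           else corrupted zs j k = zs j * cnj (zs k)"
proof (cases "k = partner j")
  case True
  have "cmod (corrupted zs j k) = 1"
    using assms by (simp add: norm_corrupted)
  then show ?thesis
    using True assms(2) corrupted_swap[of zs k j] by (simp add: mem_partner_matching_iff)
next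
  case False
  then show ?thesis
    using assms(2) by (simp add: mem_partner_matching_iff corrupted_def)
qed

lemma rotated_residual:
  assumes "cmod (zs j) = 1" and "cmod (zs k) = 1"
  shows "rotated zs j * cnj (corrupted zs j k * rotated zs k) = cis (residual j k)"
proof (cases "k = partner j")
  case True
  have "corrupted zs j k * rotated zs k = rotated zs j"
    using True cnj_mult_self_unit[OF norm_rotated[of zs k, OF assms(2)]]
    by (simp add: corrupted_def mult.assoc)
  then show ?thesis
    using True cnj_mult_self_unit[OF norm_rotated[of zs j, OF assms(1)]]
    by (simp add: residual_def mult.commute)
next
  case False
  have "rotated zs j * cnj (corrupted zs j k * rotated zs k)
        = (cnj (zs j) * zs j) * (cnj (zs k) * zs k) * cis (phase j) * cis (- phase k)"
    using False by (simp add: corrupted_def rotated_def cis_cnj mult_ac)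
  then show ?thesis
    using False by (simp add: assms cnj_mult_self_unit residual_def cis_mult)
qed

lemma phase_bounds: "0 \<le> phase k \<and> phase k \<le> pi / 2"
  by (simp add: phase_def)

lemma abs_residual_less: "\<bar>residual j k\<bar> < pi"
  using phase_bounds[of j] phase_bounds[of k] pi_gt_zero
  unfolding residual_def by (simp split: if_split; arith)

lemma delta_rotated:
  assumes "2 \<le> n" and unit: "\<forall>j<n. cmod (zs j) = 1"
  shows "delta n zs (rotated zs) = pi / 2"
proof -
  let ?S = "{d_ang (cnj (zs j) * rotated zs j) (cnj (zs k) * rotated zs k)
             | j k. j < n \<and> k < n \<and> j \<noteq> k}"
  have relative: "cnj (zs j) * rotated zs j = cis (phase j)" if "j < n" for j
    using unit that by (simp add: rotated_def mult.assoc[symmetric] cnj_mult_self_unit)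
  have phase_dist:
    "d_ang (cnj (zs j) * rotated zs j) (cnj (zs k) * rotated zs k) = \<bar>phase j - phase k\<bar>"
    if "j < n" "k < n" for j k
  proof -
    have "cis (phase j) * cnj (cis (phase k)) = cis (phase j - phase k)"
      by (simp add: cis_cnj cis_mult)
    moreover have "- pi < phase j - phase k" "phase j - phase k \<le> pi"
      using phase_bounds[of j] phase_bounds[of k] pi_gt_zero by linarith+
    ultimately show ?thesis
      using d_ang_rotate[of "cis (phase j)" "cis (phase k)" "phase j - phase k" 0]
      by (simp add: relative that)
  qed
  have subset: "?S \<subseteq> {0, pi / 2}"
  proof
    fix x
    assume "x \<in> ?S"
    then obtain j k where "j < n" "k < n" "x = \<bar>phase j - phase k\<bar>"
      using phase_dist by blast
    then show "x \<in> {0, pi / 2}"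
      by (auto simp: phase_def)
  qed
  have "pi / 2 = d_ang (cnj (zs 0) * rotated zs 0) (cnj (zs 1) * rotated zs 1)"
    using assms(1) by (simp add: phase_dist phase_def)
  then have member: "pi / 2 \<in> ?S"
    using assms(1) by force
  show ?thesis
    unfolding delta_def
  proof (rule Max_eqI)
    show "finite ?S"
      using subset by (rule finite_subset) simp
    show "y \<le> pi / 2" if "y \<in> ?S" for y
    proof -
      have "y \<in> {0, pi / 2}"
        using subset that by blast
      then show ?thesis
        using pi_gt_zero by auto
    qed
  qed (rule member)
qed

lemma residual_slope_sum_ge_1:
  fixes v :: real
  assumes "even n" and "j < n" and "\<bar>v\<bar> = 1"
  shows "1 \<le> (\<Sum>k\<in>{..<n} - {j}. if residual j k = 0 then \<bar>v\<bar> else v * sgn (residual j k))"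
proof -
  define s where "s k = (if residual j k = 0 then \<bar>v\<bar> else v * sgn (residual j k))" for k
  have s_ge: "-1 \<le> s k" for k
    using assms(3) by (auto simp: s_def sgn_if abs_if split: if_splits)
  have s_eq_1: "s k = 1" if "even k = even j \<or> k = partner j" for k
    using that assms(3) by (auto simp: s_def residual_def phase_def)
  obtain m where n: "n = 2 * m"
    using assms(1) by (auto elim: evenE)
  \<comment> \<open>each pair \<open>{2i, 2i+1}\<close> contains a node of the parity of \<open>j\<close>\<close>
  have pair_nonneg: "0 \<le> s (2 * i) + s (Suc (2 * i))" for i
    using s_ge[of "2 * i"] s_ge[of "Suc (2 * i)"] s_eq_1[of "2 * i"] s_eq_1[of "Suc (2 * i)"]
    by (cases "even j") auto
  have own_pair: "s (2 * (j div 2)) + s (Suc (2 * (j div 2))) = 2"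
  proof -
    have "2 * (j div 2) \<in> {j, partner j}" "Suc (2 * (j div 2)) \<in> {j, partner j}"
      unfolding partner_def by (cases "even j"; auto elim!: evenE oddE)+
    then show ?thesis
      using s_eq_1 by auto
  qed
  have "(\<Sum>k<n. s k) = (\<Sum>i<m. s (2 * i) + s (Suc (2 * i)))"
    unfolding n by (rule sum_lessThan_double)
  also have "\<dots> \<ge> s (2 * (j div 2)) + s (Suc (2 * (j div 2)))"
    by (rule member_le_sum) (use pair_nonneg assms(2) n in auto)
  finally have "2 \<le> (\<Sum>k<n. s k)"
    using own_pair by simp
  moreover have "(\<Sum>k\<in>{..<n} - {j}. s k) = (\<Sum>k<n. s k) - s j"
    using assms(2) by (simp add: sum_diff1)
  moreover have "s j = 1"
    by (rule s_eq_1) simp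
  ultimately show ?thesis
    unfolding s_def by simp
qed

lemma rotated_dir_deriv_ge_1:
  assumes "even n" and "\<forall>j<n. cmod (zs j) = 1" and "j < n" and "\<bar>v\<bar> = 1"
  shows "\<exists>D. has_dir_deriv (\<lambda>y. F_ang n (corrupted zs) j y (rotated zs)) (rotated zs j) v D
           \<and> 1 \<le> D"
proof (intro exI conjI)
  show "has_dir_deriv (\<lambda>y. F_ang n (corrupted zs) j y (rotated zs)) (rotated zs j) v
          (\<Sum>k\<in>{..<n} - {j}. if residual j k = 0 then \<bar>v\<bar> else v * sgn (residual j k))"
    by (rule has_dir_deriv_F_ang) (use assms(2,3) rotated_residual abs_residual_less in auto)
qed (rule residual_slope_sum_ge_1[OF assms(1,3,4)])

theorem lemma6:
  fixes n :: nat and zs :: "nat \<Rightarrow> complex"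
  assumes "even n" and "2 \<le> n"
    and "\<forall>j<n. cmod (zs j) = 1"
  shows "\<exists>Eb :: nat set set. \<exists>Z :: nat \<Rightarrow> nat \<Rightarrow> complex. \<exists>zh :: nat \<Rightarrow> complex.
           Eb \<subseteq> complete_edges n
         \<and> (\<forall>j<n. \<exists>!e. e \<in> Eb \<and> j \<in> e)
         \<and> (\<forall>j<n. \<forall>k<n. j \<noteq> k \<longrightarrow>
              (if {j, k} \<in> Eb then cmod (Z j k) = 1 \<and> Z k j = cnj (Z j k)
               else Z j k = zs j * cnj (zs k)))
         \<and> (\<forall>j<n. cmod (zh j) = 1)
         \<and> 0 < delta n zs zh \<and> delta n zs zh < pi
         \<and> (\<forall>j<n. \<forall>v\<in>{1, -1::real}. \<exists>D. has_dir_deriv (\<lambda>y. F_ang n Z j y zh) (zh j) v D \<and> D \<ge> 0)"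
proof (intro exI[of _ "partner_matching n"] exI[of _ "corrupted zs"] exI[of _ "rotated zs"]
    conjI allI impI ballI)
  show "partner_matching n \<subseteq> complete_edges n"
    using assms(1) by (rule partner_matching_subset)
  show "\<exists>!e. e \<in> partner_matching n \<and> j \<in> e" if "j < n" for j
    using that by (rule partner_matching_unique_edge)
  show "if {j, k} \<in> partner_matching n
          then cmod (corrupted zs j k) = 1 \<and> corrupted zs k j = cnj (corrupted zs j k)
          else corrupted zs j k = zs j * cnj (zs k)" if "j < n" "k < n" for j k
    using assms(3) that by (rule corrupted_measurement)
  show "cmod (rotated zs j) = 1" if "j < n" for j
    using that assms(3) by (simp add: norm_rotated)
  show "0 < delta n zs (rotated zs)" "delta n zs (rotated zs) < pi"
    unfolding delta_rotated[OF assms(2,3)] using pi_gt_zero by linarith+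
  show "\<exists>D. has_dir_deriv (\<lambda>y. F_ang n (corrupted zs) j y (rotated zs)) (rotated zs j) v D \<and> D \<ge> 0"
    if "j < n" "v \<in> {1, -1}" for j v
    using rotated_dir_deriv_ge_1[OF assms(1,3) \<open>j < n\<close>, of v] that(2) by fastforce
qed

end
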